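(* Let $b(\lambda)=\frac14\lambda^4+\frac12p\lambda^2+q\lambda$ with $p<0$, $q\in\mathbb{R}$, let $b^*(\eta)=\sup_{\lambda}[\eta\lambda-b(\lambda)]$, and $A(x,r,\eta)=b(x)+b(r)-\eta(x+r)+2b^*(\eta)$. Fix $x$ with $|x|>\sqrt{-p}$ and let $\eta_0=x^3+px+q$ (the unique $\eta$ at which $\lambda\mapsto\eta\lambda-b(\lambda)$ attains its global maximum at $\lambda=x$). Then for all $\eta\in\mathbb{R}$, $$A(x,x,\eta)\approx(\eta-\eta_0)^2(1+|\eta|)^{-2/3},$$ with implied constants independent of $\eta$.
   Context: $X\approx Y$ means $cY\le X\le c^{-1}Y$ for some $c>0$ independent of $\eta$ (it may depend on $x,p,q$). *)

theory Defs
  imports Complex_Main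
begin

definition bfun :: "real \<Rightarrow> real \<Rightarrow> real \<Rightarrow> real" where
  "bfun p q l = (1/4) * l^4 + (1/2) * p * l^2 + q * l"

definition bstar :: "real \<Rightarrow> real \<Rightarrow> real \<Rightarrow> real" where
  "bstar p q \<eta> = (SUP l::real. \<eta> * l - bfun p q l)"

definition Afun :: "real \<Rightarrow> real \<Rightarrow> real \<Rightarrow> real \<Rightarrow> real \<Rightarrow> real" where
  "Afun p q x r \<eta> = bfun p q x + bfun p q r - \<eta> * (x + r) + 2 * bstar p q \<eta>"

end

theory Submission
  imports Defs
begin

text \<open>
  Write \<open>\<eta>\<^sub>0 = b'(x)\<close>. The tangent gap \<open>G(t) = b(x+t) - b(x) - \<eta>\<^sub>0 t\<close> equals
  \<open>t\<^sup>2 ((t+2x)\<^sup>2 + 2(x\<^sup>2+p))/4\<close>, which is comparable to \<open>t\<^sup>2 + t\<^sup>4\<close> precisely because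
  \<open>x\<^sup>2 + p > 0\<close>. Substituting \<open>\<lambda> = x + t\<close> in the supremum defining \<open>b\<^sup>*\<close> gives
  \<open>A(x,x,\<eta>) = 2 sup\<^sub>t ((\<eta> - \<eta>\<^sub>0) t - G(t))\<close>. With \<open>e = |\<eta> - \<eta>\<^sub>0|\<close>, the supremum of
  \<open>e s - s\<^sup>2 - s\<^sup>4\<close> over \<open>s \<ge> 0\<close> is of order \<open>e\<^sup>2\<close> for small \<open>e\<close> (optimum \<open>s \<approx> e\<close>) and of
  order \<open>e powr (4/3)\<close> for large \<open>e\<close> (optimum \<open>s \<approx> e powr (1/3)\<close>), i.e. of order
  \<open>e\<^sup>2 (1 + e) powr (-2/3)\<close> throughout. Finally, Peetre's inequality makes the weights
  \<open>(1 + |\<eta> - \<eta>\<^sub>0|) powr (-2/3)\<close> and \<open>(1 + |\<eta>|) powr (-2/3)\<close> comparable.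
\<close>

definition comparable :: "('a \<Rightarrow> real) \<Rightarrow> ('a \<Rightarrow> real) \<Rightarrow> bool" where
  "comparable f g \<longleftrightarrow> (\<exists>c>0. \<forall>x. c * g x \<le> f x \<and> f x \<le> (1/c) * g x)"

lemma comparable_trans:
  assumes "comparable f g" and "comparable g h"
  shows "comparable f h"
proof -
  obtain c where c: "0 < c" "\<And>x. c * g x \<le> f x" "\<And>x. f x \<le> (1/c) * g x"
    using assms(1) unfolding comparable_def by blast
  obtain d where d: "0 < d" "\<And>x. d * h x \<le> g x" "\<And>x. g x \<le> (1/d) * h x"
    using assms(2) unfolding comparable_def by blast
  have "c*d * h x \<le> f x \<and> f x \<le> (1/(c*d)) * h x" for x
  proof
    have "c*d * h x \<le> c * g x" using c(1) d(2)[of x] by (simp add: mult.assoc mult_left_mono)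
    then show "c*d * h x \<le> f x" using c(2)[of x] by linarith
    have "(1/c) * g x \<le> (1/c) * ((1/d) * h x)" using c(1) by (intro mult_left_mono d(3)) simp
    moreover have "(1/c) * ((1/d) * h x) = (1/(c*d)) * h x" by simp
    ultimately show "f x \<le> (1/(c*d)) * h x" using c(3)[of x] by linarith
  qed
  then show ?thesis unfolding comparable_def using c(1) d(1) by (intro exI[of _ "c*d"]) auto
qed

lemma comparable_mult_left:
  assumes "comparable g h" and "\<And>x. 0 \<le> u x"
  shows "comparable (\<lambda>x. u x * g x) (\<lambda>x. u x * h x)"
proof -
  obtain c where c: "0 < c" "\<And>x. c * h x \<le> g x" "\<And>x. g x \<le> (1/c) * h x"
    using assms(1) unfolding comparable_def by blast
  have "c * (u x * h x) \<le> u x * g x \<and> u x * g x \<le> (1/c) * (u x * h x)" for x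
    using mult_left_mono[OF c(2) assms(2)] mult_left_mono[OF c(3) assms(2)]
    by (simp add: algebra_simps)
  then show ?thesis unfolding comparable_def using c(1) by blast
qed

lemma peetre_inequality:
  fixes u v r :: real
  assumes "0 \<le> r"
  shows "(1 + \<bar>u\<bar>) powr (-r) \<le> (1 + \<bar>v\<bar>) powr r * (1 + \<bar>u + v\<bar>) powr (-r)"
proof -
  have "1 + \<bar>u + v\<bar> \<le> 1 + \<bar>u\<bar> + \<bar>v\<bar> + \<bar>u\<bar> * \<bar>v\<bar>"
    using abs_triangle_ineq[of u v] mult_nonneg_nonneg[OF abs_ge_zero abs_ge_zero, of u v] by linarith
  also have "\<dots> = (1 + \<bar>u\<bar>) * (1 + \<bar>v\<bar>)" by (simp add: algebra_simps)
  finally have "((1 + \<bar>u\<bar>) * (1 + \<bar>v\<bar>)) powr (-r) \<le> (1 + \<bar>u + v\<bar>) powr (-r)"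
    using assms by (intro powr_mono2') auto
  moreover have "(1 + \<bar>u\<bar>) powr (-r) = (1 + \<bar>v\<bar>) powr r * ((1 + \<bar>u\<bar>) * (1 + \<bar>v\<bar>)) powr (-r)"
    by (simp add: powr_mult powr_minus)
  ultimately show ?thesis by (simp add: mult_left_mono)
qed

lemma comparable_powr_shift:
  fixes a r :: real
  assumes "r \<le> 0"
  shows "comparable (\<lambda>\<eta>. (1 + \<bar>\<eta> - a\<bar>) powr r) (\<lambda>\<eta>. (1 + \<bar>\<eta>\<bar>) powr r)"
proof -
  define K where "K = (1 + \<bar>a\<bar>) powr (-r)"
  have K: "0 < K" by (simp add: K_def)
  have "(1 + \<bar>\<eta>\<bar>) powr r \<le> K * (1 + \<bar>\<eta> - a\<bar>) powr r"
    and "(1 + \<bar>\<eta> - a\<bar>) powr r \<le> K * (1 + \<bar>\<eta>\<bar>) powr r" for \<eta>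
    using assms peetre_inequality[of "-r" \<eta> "-a"] peetre_inequality[of "-r" "\<eta> - a" a]
    by (simp_all add: K_def)
  then show ?thesis unfolding comparable_def using K
    by (intro exI[of _ "1/K"]) (auto simp: divide_le_eq mult.commute)
qed

lemma cube_root_weight:
  fixes e :: real
  assumes "0 \<le> e"
  defines "M \<equiv> (1 + e) powr (1/3)"
  shows "1 \<le> M" and "M^3 = 1 + e" and "(1 + e) powr (-2/3) = 1 / M^2"
proof -
  show "1 \<le> M" using assms by (simp add: M_def ge_one_powr_ge_zero)
  have pow: "M ^ n = (1 + e) powr (n/3)" for n :: nat
    using assms by (simp add: M_def powr_realpow[symmetric] powr_powr)
  show "M^3 = 1 + e" using pow[of 3] assms by simp
  show "(1 + e) powr (-2/3) = 1 / M^2"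
    using pow[of 2] by (simp add: powr_minus_divide)
qed

lemma linear_minus_quartic_le:
  fixes a e s M :: real
  assumes a: "0 < a" and e: "0 \<le> e" and s: "0 \<le> s" and M: "1 \<le> M" "M^3 = 1 + e"
  shows "e*s - a*(s^2 + s^4) \<le> (2 * max 1 (1/a) + 1/(2*a)) * e^2 / M^2"
proof -
  define k where "k = max 1 (1/a)"
  have k: "1 \<le> k" "1/a \<le> k" by (simp_all add: k_def)
  have M2: "0 < M^2" using M by simp
  have rhs: "(2*k + 1/(2*a)) * e^2 / M^2 = 2*k*e^2/M^2 + e^2/(2*a*M^2)"
    using a M2 by (simp add: field_simps)
  have rhs_nonneg: "0 \<le> 2*k*e^2/M^2" "0 \<le> e^2/(2*a*M^2)"
    using a k by simp_all
  have quartic_nonneg: "0 \<le> a*s^2" "0 \<le> a*s^4" "a*(s^2 + s^4) = a*s^2 + a*s^4"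
    using a by (simp_all add: distrib_left)
  consider "e \<le> 1" | "1 \<le> e" "s \<le> k*M" | "k*M \<le> s" by linarith
  then have "e*s - a*(s^2 + s^4) \<le> 2*k*e^2/M^2 + e^2/(2*a*M^2)"
  proof cases
    case 1
    have "0 \<le> (2*a*s - e)^2" by simp
    then have "e*s \<le> a*s^2 + e^2/(4*a)"
      using a by (simp add: field_simps power2_eq_square algebra_simps)
    moreover have "M^2 \<le> 2"
      using M 1 power_increasing[of 2 3 M] by simp
    then have "e^2/(4*a) \<le> e^2/(2*a*M^2)"
      using a M2 mult_right_mono[of "M^2" 2 "e^2"] by (simp add: field_simps)
    ultimately show ?thesis using quartic_nonneg rhs_nonneg by linarith
  next
    case 2
    have "e*s \<le> k*e*M" using 2 e by (simp add: mult_left_mono algebra_simps)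
    also have "\<dots> = k*e*(1 + e)/M^2"
      using M2 M(2)[symmetric] by (simp add: power2_eq_square power3_eq_cube field_simps)
    also have "\<dots> \<le> 2*k*e^2/M^2"
      using 2 k M2 e by (intro divide_right_mono) (auto simp: power2_eq_square mult_left_mono)
    finally show ?thesis using quartic_nonneg rhs_nonneg by linarith
  next
    case 3
    \<comment> \<open>Here the quartic term alone dominates: \<open>a s\<^sup>3 \<ge> a k\<^sup>3 M\<^sup>3 \<ge> 1 + e\<close>.\<close>
    have "1 + e \<le> a*k^3*M^3"
    proof -
      have "1 \<le> a*k" using a k by (simp add: field_simps)
      also have "\<dots> \<le> a*k^3" using a k power_increasing[of 1 3 k] by simp
      finally show ?thesis using M e mult_right_mono[of 1 "a*k^3" "M^3"] by simp
    qed
    also have "\<dots> \<le> a*s^3"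
    proof -
      have "(k*M)^3 \<le> s^3" using 3 k M by (intro power_mono) auto
      then show ?thesis using a by (simp add: power_mult_distrib)
    qed
    finally have "e*s \<le> a*s^3*s" using s by (simp add: mult_right_mono)
    then show ?thesis using quartic_nonneg rhs_nonneg by (simp add: power_numeral_reduce)
  qed
  then show ?thesis using rhs by (simp add: k_def)
qed

lemma linear_minus_quartic_ge:
  fixes C e M :: real
  assumes C: "1 \<le> C" and e: "0 \<le> e" and M: "1 \<le> M" "M^3 = 1 + e"
  defines "s \<equiv> e / (4*C*M^2)"
  shows "e^2 / (8*C*M^2) \<le> e*s - C*(s^2 + s^4)"
proof -
  define X where "X = e^2 / (16*C*M^2)"
  have X: "0 \<le> X" using C by (simp add: X_def)
  have "e*s = 4*X" by (simp add: X_def s_def power2_eq_square field_simps)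
  moreover have "C*s^2 \<le> X"
  proof -
    have "C*s^2 = X / M^2" using C M by (simp add: X_def s_def power2_eq_square field_simps)
    then show ?thesis using X M one_le_power[of M 2] by (simp add: divide_le_eq mult_le_cancel_left1)
  qed
  moreover have "C*s^4 \<le> X"
  proof -
    have "e^2 \<le> (M^3)^2" using e M by (intro power_mono) auto
    then have "e^2 \<le> M^6" by (simp flip: power_mult)
    also have "\<dots> \<le> 16*C^2*M^6"
    proof -
      have "1 \<le> 16*C^2" using C one_le_power[of C 2] by linarith
      then show ?thesis using M mult_right_mono[of 1 "16*C^2" "M^6"] by simp
    qed
    moreover have "0 < 16*C^2*M^6" using C M by simp
    ultimately have "e^2 / (16*C^2*M^6) \<le> 1" by simp
    moreover have "C*s^4 = X * (e^2 / (16*C^2*M^6))"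
      using C M(1) by (simp add: X_def s_def power2_eq_square field_simps eval_nat_numeral)
    ultimately show ?thesis using mult_left_le[of _ X] X by (metis times_divide_eq_right)
  qed
  moreover have "e^2 / (8*C*M^2) = 2*X" by (simp add: X_def)
  ultimately show ?thesis by (simp add: algebra_simps)
qed

lemma quartic_growth_conjugate_bounds:
  fixes B :: "real \<Rightarrow> real" and a C :: real
  assumes a: "0 < a" and B_lower: "\<And>t. a*(t^2 + t^4) \<le> B t" and B_upper: "\<And>t. B t \<le> C*(t^2 + t^4)"
  shows "\<exists>c>0. \<forall>\<epsilon>. (\<forall>t. \<epsilon>*t - B t \<le> (1/c) * (\<epsilon>^2 * (1 + \<bar>\<epsilon>\<bar>) powr (-2/3)))
                   \<and> (\<exists>t. c * (\<epsilon>^2 * (1 + \<bar>\<epsilon>\<bar>) powr (-2/3)) \<le> \<epsilon>*t - B t)"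
proof -
  define C' where "C' = max 1 C"
  define K where "K = 2 * max 1 (1/a) + 1/(2*a)"
  define c where "c = min (1/K) (1/(8*C'))"
  have C': "1 \<le> C'" by (simp add: C'_def)
  have K: "0 < K" using a by (simp add: K_def add_pos_pos)
  have c: "0 < c" "K \<le> 1/c" "c \<le> 1/(8*C')"
    using K C' by (auto simp: c_def min_def field_simps)
  have "(\<forall>t. \<epsilon>*t - B t \<le> (1/c) * (\<epsilon>^2 * (1 + \<bar>\<epsilon>\<bar>) powr (-2/3)))
      \<and> (\<exists>t. c * (\<epsilon>^2 * (1 + \<bar>\<epsilon>\<bar>) powr (-2/3)) \<le> \<epsilon>*t - B t)" for \<epsilon>
  proof (intro conjI allI)
    define e M where "e = \<bar>\<epsilon>\<bar>" and "M = (1 + e) powr (1/3)"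
    have e: "0 \<le> e" by (simp add: e_def)
    have M: "1 \<le> M" "M^3 = 1 + e" and weight: "\<epsilon>^2 * (1 + \<bar>\<epsilon>\<bar>) powr (-2/3) = e^2 / M^2"
      using cube_root_weight[OF e] by (simp_all add: M_def e_def)
    show "\<epsilon>*t - B t \<le> (1/c) * (\<epsilon>^2 * (1 + \<bar>\<epsilon>\<bar>) powr (-2/3))" for t
    proof -
      have "\<epsilon>*t \<le> e*\<bar>t\<bar>" unfolding e_def abs_mult[symmetric] by (rule abs_ge_self)
      moreover have "a*(t^2 + t^4) = a*(\<bar>t\<bar>^2 + \<bar>t\<bar>^4)" by simp
      ultimately have "\<epsilon>*t - B t \<le> e*\<bar>t\<bar> - a*(\<bar>t\<bar>^2 + \<bar>t\<bar>^4)"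
        using B_lower[of t] by linarith
      also have "\<dots> \<le> K * e^2 / M^2"
        unfolding K_def by (rule linear_minus_quartic_le[OF a e abs_ge_zero M])
      also have "\<dots> \<le> (1/c) * (e^2 / M^2)"
        using c(2) mult_right_mono[of K "1/c" "e^2/M^2"] by simp
      finally show ?thesis unfolding weight .
    qed
    define s where "s = e / (4*C'*M^2)"
    have "c * (e^2 / M^2) \<le> e^2 / (8*C'*M^2)"
      using c M mult_right_mono[of c "1/(8*C')" "e^2/M^2"] by simp
    also have "\<dots> \<le> e*s - C'*(s^2 + s^4)"
      unfolding s_def by (rule linear_minus_quartic_ge[OF C' e M])
    also have "\<dots> \<le> \<epsilon>*(sgn \<epsilon> * s) - B (sgn \<epsilon> * s)"
    proof -
      have "\<bar>sgn \<epsilon> * s\<bar> = s"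
        using C' by (cases "\<epsilon> = 0") (auto simp: s_def e_def abs_mult)
      then have "C*((sgn \<epsilon> * s)^2 + (sgn \<epsilon> * s)^4) = C*(s^2 + s^4)"
        by (metis power2_abs power_even_abs_numeral even_numeral)
      then have "B (sgn \<epsilon> * s) \<le> C*(s^2 + s^4)" using B_upper by metis
      also have "\<dots> \<le> C'*(s^2 + s^4)" by (simp add: C'_def mult_right_mono)
      finally show ?thesis by (simp add: e_def abs_sgn mult.assoc[symmetric])
    qed
    finally show "\<exists>t. c * (\<epsilon>^2 * (1 + \<bar>\<epsilon>\<bar>) powr (-2/3)) \<le> \<epsilon>*t - B t"
      unfolding weight by blast
  qed
  then show ?thesis using c(1) by blast
qed

lemma bfun_bregman_eq:
  "bfun p q (x + t) - bfun p q x - (x^3 + p*x + q) * t = t^2 * (((t + 2*x)^2 + 2*(x^2 + p)) / 4)"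
  unfolding bfun_def by (simp add: algebra_simps power2_eq_square power3_eq_cube power4_eq_xxxx)

lemma bfun_bregman_quartic_bounds:
  fixes p q x :: real
  assumes p: "p < 0" and \<delta>: "0 < x^2 + p"
  shows "\<exists>a>0. \<forall>t. a*(t^2 + t^4) \<le> bfun p q (x + t) - bfun p q x - (x^3 + p*x + q) * t
                 \<and> bfun p q (x + t) - bfun p q x - (x^3 + p*x + q) * t \<le> (1 + 3*x^2)*(t^2 + t^4)"
proof -
  define \<mu> where "\<mu> = (x^2 + p) / (4*x^2 + 1)"
  have \<mu>: "0 < \<mu>" "\<mu> \<le> 1" "\<mu>*(4*x^2) = x^2 + p - \<mu>"
    using \<delta> p by (auto simp: \<mu>_def field_simps add_pos_nonneg)
  have g_lower: "\<mu>/8 * (1 + t^2) \<le> ((t + 2*x)^2 + 2*(x^2 + p)) / 4" for t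
  proof -
    \<comment> \<open>\<open>(t + 2x)\<^sup>2 - (t\<^sup>2/2 - 4x\<^sup>2) = (t + 4x)\<^sup>2/2\<close>\<close>
    have "t^2/2 - 4*x^2 \<le> (t + 2*x)^2"
      using zero_le_power2[of "t + 4*x"] by (simp add: power2_eq_square algebra_simps)
    then have "\<mu>*(t^2/2 - 4*x^2) \<le> \<mu>*(t + 2*x)^2" using \<mu> by (simp add: mult_left_mono)
    also have "\<dots> \<le> (t + 2*x)^2" using \<mu> by (simp add: mult_left_le_one_le)
    finally have "\<mu>*(t^2/2 - 4*x^2) \<le> (t + 2*x)^2" .
    then show ?thesis using \<mu> \<delta> by (simp add: algebra_simps)
  qed
  have g_upper: "((t + 2*x)^2 + 2*(x^2 + p)) / 4 \<le> (1 + 3*x^2) * (1 + t^2)" for t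
  proof -
    have "(t + 2*x)^2 \<le> 2*t^2 + 8*x^2"
      using zero_le_power2[of "t - 2*x"] by (simp add: power2_eq_square algebra_simps)
    moreover have "(1 + 3*x^2) * (1 + t^2) = 1 + t^2 + 3*x^2 + 3*(x^2*t^2)"
      by (simp add: algebra_simps)
    moreover have "0 \<le> x^2*t^2" by simp
    ultimately show ?thesis using p zero_le_power2[of t] zero_le_power2[of x] by argo
  qed
  have quartic: "c*(t^2 + t^4) = t^2 * (c*(1 + t^2))" for c t :: real
    by (simp add: algebra_simps power4_eq_xxxx power2_eq_square)
  show ?thesis
  proof (intro exI[of _ "\<mu>/8"] conjI allI)
    show "0 < \<mu>/8" using \<mu> by simp
    fix t
    show "\<mu>/8*(t^2 + t^4) \<le> bfun p q (x + t) - bfun p q x - (x^3 + p*x + q) * t"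
      unfolding bfun_bregman_eq quartic by (rule mult_left_mono[OF g_lower]) simp
    show "bfun p q (x + t) - bfun p q x - (x^3 + p*x + q) * t \<le> (1 + 3*x^2)*(t^2 + t^4)"
      unfolding bfun_bregman_eq quartic by (rule mult_left_mono[OF g_upper]) simp
  qed
qed

lemma Afun_diag_comparable:
  fixes p q x :: real
  assumes "p < 0" and "0 < x^2 + p"
  defines "\<eta>\<^sub>0 \<equiv> x^3 + p*x + q"
  shows "comparable (Afun p q x x) (\<lambda>\<eta>. (\<eta> - \<eta>\<^sub>0)^2 * (1 + \<bar>\<eta> - \<eta>\<^sub>0\<bar>) powr (-2/3))"
proof -
  define B where "B t = bfun p q (x + t) - bfun p q x - \<eta>\<^sub>0 * t" for t
  obtain a where "0 < a" "\<And>t. a*(t^2 + t^4) \<le> B t" "\<And>t. B t \<le> (1 + 3*x^2)*(t^2 + t^4)"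
    using bfun_bregman_quartic_bounds[OF assms(1,2), of q] unfolding B_def \<eta>\<^sub>0_def by blast
  from quartic_growth_conjugate_bounds[OF this] obtain c where c: "0 < c"
    and gap_upper: "\<And>\<epsilon> t. \<epsilon>*t - B t \<le> (1/c) * (\<epsilon>^2 * (1 + \<bar>\<epsilon>\<bar>) powr (-2/3))"
    and gap_lower: "\<And>\<epsilon>. \<exists>t. c * (\<epsilon>^2 * (1 + \<bar>\<epsilon>\<bar>) powr (-2/3)) \<le> \<epsilon>*t - B t"
    by blast
  have "c/2 * w \<le> Afun p q x x \<eta> \<and> Afun p q x x \<eta> \<le> (1/(c/2)) * w"
    if w: "w = (\<eta> - \<eta>\<^sub>0)^2 * (1 + \<bar>\<eta> - \<eta>\<^sub>0\<bar>) powr (-2/3)" for \<eta> w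
  proof -
    have shift: "\<eta>*l - bfun p q l = \<eta>*x - bfun p q x + ((\<eta> - \<eta>\<^sub>0)*(l - x) - B (l - x))" for l
      by (simp add: B_def algebra_simps)
    have bounded: "\<eta>*l - bfun p q l \<le> \<eta>*x - bfun p q x + (1/c) * w" for l
      unfolding w using shift[of l] gap_upper[of "\<eta> - \<eta>\<^sub>0" "l - x"] by linarith
    then have upper: "bstar p q \<eta> \<le> \<eta>*x - bfun p q x + (1/c) * w"
      unfolding bstar_def by (intro cSUP_least) auto
    obtain t where "c * w \<le> (\<eta> - \<eta>\<^sub>0)*t - B t"
      using gap_lower w by blast
    then have "\<eta>*x - bfun p q x + c * w \<le> \<eta>*(x + t) - bfun p q (x + t)"
      using shift[of "x + t"] by simp
    also have "\<dots> \<le> bstar p q \<eta>"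
      unfolding bstar_def by (rule cSUP_upper[OF UNIV_I bdd_aboveI2[OF bounded]])
    finally have lower: "\<eta>*x - bfun p q x + c * w \<le> bstar p q \<eta>" .
    have A: "Afun p q x x \<eta> = 2 * (bstar p q \<eta> - (\<eta>*x - bfun p q x))"
      by (simp add: Afun_def algebra_simps)
    have "c/2 * w \<le> 2 * (c * w)" using c by (simp add: w)
    moreover have "1/(c/2) * w = 2 * ((1/c) * w)" by simp
    ultimately show ?thesis using A upper lower by argo
  qed
  then show ?thesis unfolding comparable_def using c by (intro exI[of _ "c/2"]) auto
qed

theorem corollary6p2:
  fixes p q x :: real
  assumes "p < 0" and "\<bar>x\<bar> > sqrt (- p)"
  shows "\<exists>c>0. \<forall>\<eta>::real.
           c * ((\<eta> - (x^3 + p*x + q))^2 * (1 + \<bar>\<eta>\<bar>) powr (-2/3)) \<le> Afun p q x x \<eta> \<and>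
           Afun p q x x \<eta> \<le> (1/c) * ((\<eta> - (x^3 + p*x + q))^2 * (1 + \<bar>\<eta>\<bar>) powr (-2/3))"
proof -
  define \<eta>\<^sub>0 where "\<eta>\<^sub>0 = x^3 + p*x + q"
  have "sqrt (- p)^2 < \<bar>x\<bar>^2" using assms by (intro power_strict_mono) auto
  then have "0 < x^2 + p" using assms(1) by simp
  then have "comparable (Afun p q x x) (\<lambda>\<eta>. (\<eta> - \<eta>\<^sub>0)^2 * (1 + \<bar>\<eta> - \<eta>\<^sub>0\<bar>) powr (-2/3))"
    unfolding \<eta>\<^sub>0_def by (rule Afun_diag_comparable[OF assms(1)])
  moreover have "comparable (\<lambda>\<eta>. (\<eta> - \<eta>\<^sub>0)^2 * (1 + \<bar>\<eta> - \<eta>\<^sub>0\<bar>) powr (-2/3))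
                            (\<lambda>\<eta>. (\<eta> - \<eta>\<^sub>0)^2 * (1 + \<bar>\<eta>\<bar>) powr (-2/3))"
    by (rule comparable_mult_left[OF comparable_powr_shift]) simp_all
  ultimately have "comparable (Afun p q x x) (\<lambda>\<eta>. (\<eta> - \<eta>\<^sub>0)^2 * (1 + \<bar>\<eta>\<bar>) powr (-2/3))"
    by (rule comparable_trans)
  then show ?thesis unfolding comparable_def \<eta>\<^sub>0_def .
qed

end
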